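(* Let $n\geq1$, $1\leq l\leq n$, $m\leq n-l+1$ and $\eta\in\Omega$. Let $(a_{\bar w})_{\bar w\in\overline{T_\eta}}$ be complex numbers with $\sum_{\bar w\in\overline{T_\eta}}a_{\bar w}\bar w=0$ in $\mathbb C^{\lambda_{2,n}}$. Suppose $E=\{(c_1,l),\ldots,(c_m,l)\}\subset T_\eta$ for some $0<c_1<\cdots<c_m$, and that $a_{\bar u}=0$ for every $u\in T_\eta\setminus E$ with $\pi_2(u)\geq l$. Then $a_{\bar v}=0$ for all $v\in E$. The same holds with $E=\{(l,c_1),\ldots,(l,c_m)\}$ and the condition $\pi_2(u)\geq l$ replaced by $\pi_1(u)\geq l$.
   Context: $\pi_i$ is the $i$-th coordinate. $\Lambda_{2,n}=\{\alpha\in\mathbb N^2:1\leq\alpha_1+\alpha_2\leq n\}$, $\lambda_{2,n}=|\Lambda_{2,n}|$; $\bar v=\big(\binom{v_1}{\alpha_1}\binom{v_2}{\alpha_2}\big)_{\alpha\in\Lambda_{2,n}}$. $\Omega$ is the set of $\eta=(z,d_0,\ldots,d_r)$ with $z\in\{0,1\}$, $d_0=0$, $d_i\geq1$, $\sum d_i=n$. For $1\leq j\leq n$, $t$ unique with $\sum_{i<t}d_i<j\leq\sum_{i\leq t}d_i$, $c=j-\sum_{i<t}d_i$; $v_{j,\eta}=(\sum_{i\text{ odd},i<t}d_i+c,0)$ if $z=1,t$ odd; $(0,\sum_{i\text{ even},i<t}d_i+c)$ if $z=1,t$ even; $(0,\sum_{i\text{ odd},i<t}d_i+c)$ if $z=0,t$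 odd; $(\sum_{i\text{ even},i<t}d_i+c,0)$ if $z=0,t$ even. $T_{j,\eta}=\{v_{j,\eta}+p(1,1):0\leq p\leq n-j\}$, $T_{0,\eta}=\{(p,p):1\leq p\leq n\}$, $T_\eta=\bigcup_{j=0}^nT_{j,\eta}$, $\overline{T_\eta}=\{\bar w:w\in T_\eta\}$ (distinct elements of $T_\eta$ give distinct vectors). *)

theory Defs
  imports Complex_Main
begin

text \<open>Points of N^2 are pairs (nat * nat); pi_1 = fst, pi_2 = snd.\<close>

definition Lambda2 :: "nat \<Rightarrow> (nat \<times> nat) set" where
  "Lambda2 n = {\<alpha>. 1 \<le> fst \<alpha> + snd \<alpha> \<and> fst \<alpha> + snd \<alpha> \<le> n}"

text \<open>The vector bar v in C^(lambda_{2,n}), represented as a function on Lambda2 n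
  (extended by 0 outside Lambda2 n).\<close>
definition barv :: "nat \<Rightarrow> nat \<times> nat \<Rightarrow> (nat \<times> nat \<Rightarrow> complex)" where
  "barv n v = (\<lambda>\<alpha>. if \<alpha> \<in> Lambda2 n
      then of_nat ((fst v choose fst \<alpha>) * (snd v choose snd \<alpha>)) else 0)"

text \<open>eta = (z, d_0, ..., d_r) is represented as a pair (z, d) with d = [d_0, ..., d_r].\<close>
definition Omega :: "nat \<Rightarrow> (nat \<times> nat list) set" where
  "Omega n = {(z, d). z \<in> {0, 1} \<and> d \<noteq> [] \<and> d ! 0 = 0 \<and>
      (\<forall>i \<in> {1..<length d}. 1 \<le> d ! i) \<and> sum_list d = n}"

definition psum :: "nat list \<Rightarrow> nat \<Rightarrow> nat" where
  "psum d t = (\<Sum>i<t. d ! i)"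

definition tidx :: "nat list \<Rightarrow> nat \<Rightarrow> nat" where
  "tidx d j = (THE t. t < length d \<and> psum d t < j \<and> j \<le> psum d (Suc t))"

definition vpt :: "nat \<times> nat list \<Rightarrow> nat \<Rightarrow> nat \<times> nat" where
  "vpt \<eta> j = (let z = fst \<eta>; d = snd \<eta>; t = tidx d j; c = j - psum d t;
      so = (\<Sum>i<t. if odd i then d ! i else 0);
      se = (\<Sum>i<t. if even i then d ! i else 0)
    in if z = 1 then (if odd t then (so + c, 0) else (0, se + c))
       else (if odd t then (0, so + c) else (se + c, 0)))"

definition Tj :: "nat \<Rightarrow> nat \<times> nat list \<Rightarrow> nat \<Rightarrow> (nat \<times> nat) set" where
  "Tj n \<eta> j = (if j = 0 then {(p, p) | p. 1 \<le> p \<and> p \<le> n}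
     else {(fst (vpt \<eta> j) + p, snd (vpt \<eta> j) + p) | p. p \<le> n - j})"

definition Teta :: "nat \<Rightarrow> nat \<times> nat list \<Rightarrow> (nat \<times> nat) set" where
  "Teta n \<eta> = (\<Union>j\<in>{0..n}. Tj n \<eta> j)"

end

theory Submission imports Defs "HOL-Computational_Algebra.Polynomial" begin

text \<open>Reading the relation \<open>\<Sum>\<^sub>w a\<^sub>w w = 0\<close> at the coordinate \<open>(k, l)\<close>, \<open>k \<le> n - l\<close>,
  gives \<open>\<Sum>\<^sub>u a\<^sub>u (u\<^sub>1 choose k) (u\<^sub>2 choose l) = 0\<close>. Points with \<open>u\<^sub>2 < l\<close> drop out because
  the binomial vanishes, the other points outside \<open>E\<close> by hypothesis; so the coefficients on
  \<open>E\<close> satisfy the \<open>n - l + 1 \<ge> |E|\<close> moment equations \<open>\<Sum>\<^sub>i a\<^sub>i (c\<^sub>i choose k) = 0\<close>.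
  The polynomials \<open>x choose k\<close>, \<open>k < |E|\<close>, span all polynomials of degree \<open>< |E|\<close>, and
  testing against the one vanishing at all \<open>c\<^sub>j\<close> but \<open>c\<^sub>i\<close> isolates \<open>a\<^sub>i\<close>.\<close>

definition binomial_poly :: "nat \<Rightarrow> 'a::field_char_0 poly" where
  "binomial_poly k = smult (inverse (fact k)) (\<Prod>i<k. [:- of_nat i, 1:])"

lemma poly_binomial_poly:
  "poly (binomial_poly k) (of_nat x) = (of_nat (x choose k) :: 'a::field_char_0)"
  by (simp add: binomial_poly_def poly_prod binomial_gbinomial gbinomial_prod_rev
      atLeast0LessThan field_simps)

lemma degree_binomial_poly: "degree (binomial_poly k :: 'a::field_char_0 poly) = k"
  by (simp add: binomial_poly_def degree_prod_eq_sum_degree)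

lemma lead_coeff_binomial_poly:
  "lead_coeff (binomial_poly k :: 'a::field_char_0 poly) = inverse (fact k)"
proof -
  have "lead_coeff (\<Prod>i<k. [:- of_nat i, 1::'a:]) = 1"
    by (simp add: lead_coeff_prod)
  then show ?thesis
    by (simp add: binomial_poly_def degree_prod_eq_sum_degree)
qed

lemma sum_poly_eq_0_if_binomial_moments_eq_0:
  fixes A :: "'b \<Rightarrow> 'a::field_char_0" and f :: "'b \<Rightarrow> nat"
  assumes moments: "\<And>k. k < N \<Longrightarrow> (\<Sum>u\<in>E. A u * of_nat (f u choose k)) = 0"
    and "degree p < N"
  shows "(\<Sum>u\<in>E. A u * poly p (of_nat (f u))) = 0"
  using \<open>degree p < N\<close>
proof (induction "degree p" arbitrary: p rule: less_induct)
  case less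
  define d where "d = degree p"
  \<comment> \<open>\<open>p - r\<close> has lower degree, and \<open>r\<close> is a multiple of a binomial moment\<close>
  define r where "r = smult (lead_coeff p * fact d) (binomial_poly d)"
  have "degree (p - r) < d \<or> p - r = 0"
  proof -
    have "degree (p - r) \<le> d"
      unfolding r_def d_def
      by (metis degree_binomial_poly degree_diff_le degree_smult_le order_refl)
    moreover have "coeff (p - r) d = 0"
      using lead_coeff_binomial_poly[of d, unfolded degree_binomial_poly, where 'a='a]
      by (simp add: r_def d_def)
    ultimately show ?thesis
      by (metis le_neq_implies_less leading_coeff_0_iff)
  qed
  then have "(\<Sum>u\<in>E. A u * poly (p - r) (of_nat (f u))) = 0"
    using less.hyps[of "p - r"] less.prems d_def by fastforce
  moreover have "(\<Sum>u\<in>E. A u * poly r (of_nat (f u)))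
      = lead_coeff p * fact d * (\<Sum>u\<in>E. A u * of_nat (f u choose d))"
    by (simp add: r_def poly_binomial_poly sum_distrib_left mult_ac)
  moreover have "(\<Sum>u\<in>E. A u * of_nat (f u choose d)) = 0"
    using moments less.prems d_def by simp
  ultimately show ?case
    by (simp add: algebra_simps sum.distrib sum_subtractf)
qed

lemma weight_eq_0_if_binomial_moments_eq_0:
  fixes A :: "'b \<Rightarrow> 'a::field_char_0" and f :: "'b \<Rightarrow> nat"
  assumes "finite E" and "inj_on f E"
    and moments: "\<And>k. k < card E \<Longrightarrow> (\<Sum>u\<in>E. A u * of_nat (f u choose k)) = 0"
    and "v \<in> E"
  shows "A v = 0"
proof -
  define p where "p = (\<Prod>u\<in>E - {v}. [:- of_nat (f u), 1::'a:])"
  have "degree p = card E - 1"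
    using assms(1,4) by (simp add: p_def degree_prod_eq_sum_degree)
  moreover have "card E > 0"
    using assms(1,4) card_gt_0_iff by blast
  ultimately have "degree p < card E"
    by simp
  then have "(\<Sum>u\<in>E. A u * poly p (of_nat (f u))) = 0"
    using sum_poly_eq_0_if_binomial_moments_eq_0 moments by blast
  moreover have "(\<Sum>u\<in>E. A u * poly p (of_nat (f u))) = A v * poly p (of_nat (f v))"
  proof -
    have "poly p (of_nat (f u)) = 0" if "u \<in> E - {v}" for u
      using assms(1) that unfolding p_def poly_prod by (intro prod_zero) auto
    then show ?thesis
      using assms(1,4) by (simp add: sum.remove)
  qed
  moreover have "poly p (of_nat (f v)) \<noteq> 0"
    using assms(1,2,4) by (auto simp: p_def poly_prod inj_on_def)
  ultimately show ?thesis by simp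
qed

lemma weight_eq_0_on_level_set:
  fixes A :: "'b \<Rightarrow> 'a::field_char_0" and f g :: "'b \<Rightarrow> nat"
  assumes "finite T" and "E \<subseteq> T" and "inj_on f E" and "card E + l \<le> n + 1"
    and level: "\<And>u. u \<in> E \<Longrightarrow> g u = l"
    and outside: "\<And>u. u \<in> T - E \<Longrightarrow> l \<le> g u \<Longrightarrow> A u = 0"
    and moments: "\<And>k. k + l \<le> n \<Longrightarrow>
      (\<Sum>u\<in>T. A u * of_nat (f u choose k) * of_nat (g u choose l)) = 0"
    and "v \<in> E"
  shows "A v = 0"
proof (rule weight_eq_0_if_binomial_moments_eq_0[OF _ \<open>inj_on f E\<close> _ \<open>v \<in> E\<close>])
  show "finite E"
    using assms(1,2) finite_subset by blast
  fix k assume "k < card E"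
  have "(\<Sum>u\<in>T. A u * of_nat (f u choose k) * of_nat (g u choose l))
      = (\<Sum>u\<in>E. A u * of_nat (f u choose k))"
  proof (rule sum.mono_neutral_cong_right[OF assms(1,2)])
    show "\<forall>u\<in>T - E. A u * of_nat (f u choose k) * of_nat (g u choose l) = 0"
      using outside by (metis binomial_eq_0 mult_eq_0_iff not_le of_nat_0)
  qed (simp add: level)
  then show "(\<Sum>u\<in>E. A u * of_nat (f u choose k)) = 0"
    using moments \<open>k < card E\<close> \<open>card E + l \<le> n + 1\<close> by simp
qed

lemma inj_barv: "1 \<le> n \<Longrightarrow> inj (barv n)"
proof (rule injI)
  fix u v assume "1 \<le> n" and "barv n u = barv n v"
  then have "barv n u (1, 0) = barv n v (1, 0)" and "barv n u (0, 1) = barv n v (0, 1)"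
    by simp_all
  then show "u = v"
    using \<open>1 \<le> n\<close> by (auto simp: barv_def Lambda2_def prod_eq_iff)
qed

lemma sum_barv_binomial_eq_0:
  assumes "1 \<le> n" and lin: "\<forall>\<alpha> \<in> Lambda2 n. (\<Sum>w \<in> barv n ` T. a w * w \<alpha>) = 0"
    and "1 \<le> i + j" and "i + j \<le> n"
  shows "(\<Sum>u\<in>T. a (barv n u) * of_nat (fst u choose i) * of_nat (snd u choose j)) = 0"
proof -
  have "inj_on (barv n) T"
    using inj_barv[OF \<open>1 \<le> n\<close>] inj_on_subset by blast
  moreover have "(i, j) \<in> Lambda2 n"
    using assms(3,4) by (simp add: Lambda2_def)
  ultimately have "(\<Sum>u\<in>T. a (barv n u) * barv n u (i, j)) = 0"
    using lin by (simp add: sum.reindex)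
  then show ?thesis
    using \<open>(i, j) \<in> Lambda2 n\<close> by (simp add: barv_def mult.assoc)
qed

lemma finite_Teta: "finite (Teta n \<eta>)"
proof -
  have "finite (Tj n \<eta> j)" for j
  proof (cases "j = 0")
    case True
    then have "Tj n \<eta> j = (\<lambda>p. (p, p)) ` {1..n}"
      by (auto simp: Tj_def)
    then show ?thesis by simp
  next
    case False
    then have "Tj n \<eta> j = (\<lambda>p. (fst (vpt \<eta> j) + p, snd (vpt \<eta> j) + p)) ` {..n - j}"
      by (auto simp: Tj_def)
    then show ?thesis by simp
  qed
  then show ?thesis by (simp add: Teta_def)
qed

lemma card_family_le: "card {f i | i. 1 \<le> i \<and> i \<le> m} \<le> m"
proof -
  have "{f i | i. 1 \<le> i \<and> i \<le> m} = f ` {1..m}"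
    by auto
  also have "card (f ` {1..m}) \<le> m"
    using card_image_le[of "{1..m}" f] by simp
  finally show ?thesis .
qed

theorem lemma2p7:
  fixes n l m :: nat and \<eta> :: "nat \<times> nat list"
    and a :: "(nat \<times> nat \<Rightarrow> complex) \<Rightarrow> complex"
    and c :: "nat \<Rightarrow> nat"
  assumes "1 \<le> n" and "1 \<le> l" and "l \<le> n" and "m \<le> n - l + 1"
    and "\<eta> \<in> Omega n"
    and lin: "\<forall>\<alpha> \<in> Lambda2 n.
          (\<Sum>w \<in> barv n ` Teta n \<eta>. a w * w \<alpha>) = 0"
    and "0 < c 1" and "strict_mono_on {1..m} c"
  shows "(let E = {(c i, l) | i. 1 \<le> i \<and> i \<le> m} in
           E \<subseteq> Teta n \<eta> \<and>
           (\<forall>u \<in> Teta n \<eta> - E. l \<le> snd u \<longrightarrow> a (barv n u) = 0)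
           \<longrightarrow> (\<forall>v \<in> E. a (barv n v) = 0))
       \<and> (let E = {(l, c i) | i. 1 \<le> i \<and> i \<le> m} in
           E \<subseteq> Teta n \<eta> \<and>
           (\<forall>u \<in> Teta n \<eta> - E. l \<le> fst u \<longrightarrow> a (barv n u) = 0)
           \<longrightarrow> (\<forall>v \<in> E. a (barv n v) = 0))"
proof -
  let ?T = "Teta n \<eta>" and ?A = "\<lambda>u. a (barv n u)"
  note moments = sum_barv_binomial_eq_0[OF \<open>1 \<le> n\<close> lin]
  let ?E = "{(c i, l) | i. 1 \<le> i \<and> i \<le> m}" and ?E' = "{(l, c i) | i. 1 \<le> i \<and> i \<le> m}"
  have card_E: "card ?E + l \<le> n + 1"
    using card_family_le[of "\<lambda>i. (c i, l)" m] \<open>l \<le> n\<close> \<open>m \<le> n - l + 1\<close> by linarith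
  have card_E': "card ?E' + l \<le> n + 1"
    using card_family_le[of "\<lambda>i. (l, c i)" m] \<open>l \<le> n\<close> \<open>m \<le> n - l + 1\<close> by linarith
  show ?thesis
    unfolding Let_def
  proof (intro conjI impI ballI)
    fix v assume E_hyps: "?E \<subseteq> ?T \<and> (\<forall>u \<in> ?T - ?E. l \<le> snd u \<longrightarrow> ?A u = 0)" and "v \<in> ?E"
    show "?A v = 0"
    proof (rule weight_eq_0_on_level_set[where A = ?A and f = fst and g = snd,
          OF finite_Teta _ _ card_E _ _ _ \<open>v \<in> ?E\<close>])
      show "inj_on fst ?E"
        by (auto simp: inj_on_def)
    qed (use E_hyps moments \<open>1 \<le> l\<close> in auto)
  next
    fix v assume E_hyps: "?E' \<subseteq> ?T \<and> (\<forall>u \<in> ?T - ?E'. l \<le> fst u \<longrightarrow> ?A u = 0)" and "v \<in> ?E'"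
    show "?A v = 0"
    proof (rule weight_eq_0_on_level_set[where A = ?A and f = snd and g = fst,
          OF finite_Teta _ _ card_E' _ _ _ \<open>v \<in> ?E'\<close>])
      show "inj_on snd ?E'"
        by (auto simp: inj_on_def)
    qed (use E_hyps moments \<open>1 \<le> l\<close> in \<open>auto simp: mult_ac\<close>)
  qed
qed

end
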